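(* Let $T$ be a tree with at least $3$ vertices. Then for every $v\in V(T)$, $f_{T,v}(v)+1\ge \max_{w\in V(T)} f_{T,w}(w)$.
   Context: For a tree $T$ rooted at $v$, the values $f_{T,v}(w)$, $w\in V(T)$, are defined recursively: if $w$ has no children (no descendants) in the rooted tree, $f_{T,v}(w)=0$; otherwise let $u_0,\dots,u_k$ be the children of $w$, let $T_i$ be the subtree consisting of $u_i$ and all its descendants, rooted at $u_i$, and order them so that $c_i:=f_{T_i,u_i}(u_i)$ satisfy $c_0\ge c_1\ge\cdots\ge c_k$; then $f_{T,v}(w)=\max_{0\le i\le k}(i+c_i)$. *)

theory Defs
  imports Main "HOL-Library.Multiset"
begin

definition simple_graph :: "'a set \<Rightarrow> ('a \<Rightarrow> 'a \<Rightarrow> bool) \<Rightarrow> bool" where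
  "simple_graph V E \<longleftrightarrow> finite V \<and> (\<forall>u w. E u w \<longrightarrow> u \<in> V \<and> w \<in> V)
     \<and> (\<forall>u w. E u w \<longrightarrow> E w u) \<and> (\<forall>u. \<not> E u u)"

definition connected_graph :: "'a set \<Rightarrow> ('a \<Rightarrow> 'a \<Rightarrow> bool) \<Rightarrow> bool" where
  "connected_graph V E \<longleftrightarrow> (\<forall>u\<in>V. \<forall>w\<in>V. E\<^sup>*\<^sup>* u w)"

definition is_cycle :: "('a \<Rightarrow> 'a \<Rightarrow> bool) \<Rightarrow> 'a list \<Rightarrow> bool" where
  "is_cycle E cs \<longleftrightarrow> length cs \<ge> 3 \<and> distinct cs
     \<and> (\<forall>i. Suc i < length cs \<longrightarrow> E (cs ! i) (cs ! Suc i))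
     \<and> E (last cs) (hd cs)"

definition is_tree :: "'a set \<Rightarrow> ('a \<Rightarrow> 'a \<Rightarrow> bool) \<Rightarrow> bool" where
  "is_tree V E \<longleftrightarrow> simple_graph V E \<and> V \<noteq> {} \<and> connected_graph V E
     \<and> (\<nexists>cs. is_cycle E cs)"

definition fcomb :: "nat multiset \<Rightarrow> nat" where
  "fcomb M = (let cs = rev (sorted_list_of_multiset M) in
      if cs = [] then 0 else Max {i + cs ! i | i. i < length cs})"

text \<open>fval E p w c: in the rooted tree where w has parent p (None if w is the root),
  the value f at w equals c.\<close>

inductive fval :: "('a \<Rightarrow> 'a \<Rightarrow> bool) \<Rightarrow> 'a option \<Rightarrow> 'a \<Rightarrow> nat \<Rightarrow> bool"
  for E where
  "\<lbrakk> finite {u. E w u \<and> Some u \<noteq> p};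
     \<forall>u\<in>{u. E w u \<and> Some u \<noteq> p}. fval E (Some w) u (g u) \<rbrakk>
   \<Longrightarrow> fval E p w (fcomb (image_mset g (mset_set {u. E w u \<and> Some u \<noteq> p})))"

definition froot :: "('a \<Rightarrow> 'a \<Rightarrow> bool) \<Rightarrow> 'a \<Rightarrow> nat" where
  "froot E v = (THE c. fval E None v c)"

end

theory Submission
  imports Defs
begin

text \<open>Let \<open>F(p, w)\<close> be the value of \<open>f\<close> at \<open>w\<close> in the component of \<open>w\<close> in \<open>T - pw\<close>,
  rooted at \<open>w\<close>.  The combination step is monotone in the multiset of values of the
  children, and adding a value \<open>\<le> k + 1\<close> to a multiset whose combination is \<open>\<le> k\<close> gives
  a combination \<open>\<le> k + 1\<close>.  Hence \<open>F(q, w) \<le> k\<close> and \<open>F(w, q) \<le> k + 1\<close> imply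
  \<open>F(p, w) \<le> k + 1\<close> for every \<open>p\<close>.  Along the path \<open>v = x\<^sub>0, \<dots>, x\<^sub>n = w\<close> each
  \<open>F(x\<^sub>i\<^sub>-\<^sub>1, x\<^sub>i)\<close> is at most \<open>f\<^sub>T\<^sub>,\<^sub>v(v)\<close>, being the value of a vertex of \<open>T\<close>
  rooted at \<open>v\<close>, so by induction on \<open>i\<close> the reversed values \<open>F(x\<^sub>i, x\<^sub>i\<^sub>-\<^sub>1)\<close> are at
  most \<open>f\<^sub>T\<^sub>,\<^sub>v(v) + 1\<close>; one more step at \<open>w\<close> bounds \<open>f\<^sub>T\<^sub>,\<^sub>w(w)\<close>.\<close>

definition count_ge :: "nat multiset \<Rightarrow> nat \<Rightarrow> nat" where
  "count_ge M t = size (filter_mset (\<lambda>x. t \<le> x) M)"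

lemma fcomb_le_iff_sorted:
  "fcomb M \<le> k \<longleftrightarrow> (\<forall>i<size M. i + rev (sorted_list_of_multiset M) ! i \<le> k)"
proof -
  define cs where "cs = rev (sorted_list_of_multiset M)"
  have len: "length cs = size M" unfolding cs_def
    by (metis length_rev mset_sorted_list_of_multiset size_mset)
  show ?thesis
  proof (cases "cs = []")
    case True
    then show ?thesis using len unfolding fcomb_def cs_def[symmetric] by simp
  next
    case False
    then have "{i + cs ! i | i. i < size M} \<noteq> {}"
      using len by (metis (mono_tags, lifting) empty_Collect_eq length_greater_0_conv)
    then show ?thesis using False len
      unfolding fcomb_def cs_def[symmetric] Let_def by (auto simp: Max_le_iff)
  qed
qed

text \<open>With \<open>c\<^sub>0 \<ge> c\<^sub>1 \<ge> \<dots>\<close>, the largest \<open>i\<close> with \<open>c\<^sub>i \<ge> t\<close> is \<open>count_ge M t - 1\<close>; this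
  turns the order-dependent definition of \<open>fcomb\<close> into an order-free bound.\<close>

lemma fcomb_le_iff_count_ge:
  "fcomb M \<le> k \<longleftrightarrow> (\<forall>t. 0 < count_ge M t \<longrightarrow> t + count_ge M t \<le> k + 1)"
proof -
  define cs where "cs = rev (sorted_list_of_multiset M)"
  have mset_cs: "mset cs = M" unfolding cs_def by simp
  have "sorted_wrt (\<ge>) cs" unfolding cs_def by (simp add: sorted_wrt_rev)
  then have antitone_cs: "cs ! i \<le> cs ! j" if "j \<le> i" "i < length cs" for i j
    using sorted_wrt_nth_less[of "(\<ge>)" cs j i] that by (cases "j = i") auto
  have count_ge_cs: "count_ge M t = card {j. j < length cs \<and> t \<le> cs ! j}" for t
  proof -
    have "count_ge M t = length (filter (\<lambda>x. t \<le> x) cs)"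
      unfolding count_ge_def mset_cs[symmetric] by (metis mset_filter size_mset)
    also have "\<dots> = card {j. j < length cs \<and> t \<le> cs ! j}" by (rule length_filter_conv_card)
    finally show ?thesis .
  qed
  have fcomb_cs: "fcomb M \<le> k \<longleftrightarrow> (\<forall>i<length cs. i + cs ! i \<le> k)"
    using fcomb_le_iff_sorted[of M k] mset_cs cs_def by (metis size_mset)
  show ?thesis
  proof
    assume bound: "fcomb M \<le> k"
    show "\<forall>t. 0 < count_ge M t \<longrightarrow> t + count_ge M t \<le> k + 1"
    proof (intro allI impI)
      fix t assume "0 < count_ge M t"
      define J where "J = {j. j < length cs \<and> t \<le> cs ! j}"
      have "finite J" unfolding J_def by simp
      moreover have "J \<noteq> {}"
        using \<open>0 < count_ge M t\<close> count_ge_cs[of t] unfolding J_def by (metis card.empty less_irrefl)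
      ultimately have "Max J \<in> J" and "J \<subseteq> {..Max J}" by auto
      then have "card J \<le> Suc (Max J)" using card_mono[of "{..Max J}" J] by simp
      moreover have "Max J + cs ! Max J \<le> k" and "t \<le> cs ! Max J"
        using bound fcomb_cs \<open>Max J \<in> J\<close> J_def by auto
      ultimately show "t + count_ge M t \<le> k + 1" using count_ge_cs J_def by simp
    qed
  next
    assume bound: "\<forall>t. 0 < count_ge M t \<longrightarrow> t + count_ge M t \<le> k + 1"
    show "fcomb M \<le> k" unfolding fcomb_cs
    proof (intro allI impI)
      fix i assume i: "i < length cs"
      have "{..i} \<subseteq> {j. j < length cs \<and> cs ! i \<le> cs ! j}"
        using i antitone_cs by auto
      then have "Suc i \<le> count_ge M (cs ! i)"
        unfolding count_ge_cs using card_mono[of "{j. j < length cs \<and> cs ! i \<le> cs ! j}" "{..i}"] by simp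
      moreover from this have "cs ! i + count_ge M (cs ! i) \<le> k + 1" using bound by simp
      ultimately show "i + cs ! i \<le> k" by linarith
    qed
  qed
qed

lemma member_le_fcomb: "c \<in># M \<Longrightarrow> c \<le> fcomb M"
proof -
  assume "c \<in># M"
  then have "c \<in># filter_mset (\<lambda>x. c \<le> x) M" by simp
  then have "0 < count_ge M c" unfolding count_ge_def by (metis gr0I size_eq_0_iff_empty empty_iff set_mset_empty)
  moreover from this have "c + count_ge M c \<le> fcomb M + 1"
    using fcomb_le_iff_count_ge[of M "fcomb M"] by blast
  ultimately show ?thesis by linarith
qed

lemma count_ge_mono: "M \<subseteq># N \<Longrightarrow> count_ge M t \<le> count_ge N t"
  unfolding count_ge_def by (simp add: multiset_filter_mono size_mset_mono)

lemma fcomb_mono: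
  assumes "M \<subseteq># N"
  shows "fcomb M \<le> fcomb N"
  unfolding fcomb_le_iff_count_ge[of M]
proof (intro allI impI)
  fix t assume "0 < count_ge M t"
  moreover have "count_ge M t \<le> count_ge N t" using count_ge_mono[OF assms] .
  moreover from calculation have "t + count_ge N t \<le> fcomb N + 1"
    using fcomb_le_iff_count_ge[of N "fcomb N"] by auto
  ultimately show "t + count_ge M t \<le> fcomb N + 1" by linarith
qed

lemma fcomb_add_mset_le:
  assumes "fcomb M \<le> k" and "a \<le> k + 1"
  shows "fcomb (add_mset a M) \<le> k + 1"
  unfolding fcomb_le_iff_count_ge
proof (intro allI impI)
  fix t assume "0 < count_ge (add_mset a M) t"
  have "count_ge (add_mset a M) t = count_ge M t + (if t \<le> a then 1 else 0)"
    unfolding count_ge_def by simp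
  moreover have "0 < count_ge M t \<Longrightarrow> t + count_ge M t \<le> k + 1"
    using assms(1) fcomb_le_iff_count_ge by blast
  ultimately show "t + count_ge (add_mset a M) t \<le> k + 1 + 1"
    using \<open>0 < count_ge (add_mset a M) t\<close> assms(2) by (cases "t \<le> a"; cases "count_ge M t = 0") auto
qed

abbreviation children :: "('a \<Rightarrow> 'a \<Rightarrow> bool) \<Rightarrow> 'a option \<Rightarrow> 'a \<Rightarrow> 'a set" where
  "children E p w \<equiv> {u. E w u \<and> Some u \<noteq> p}"

lemma mset_set_subseteq_add_mset:
  assumes "finite B" and "A \<subseteq> insert a B"
  shows "mset_set A \<subseteq># add_mset a (mset_set B)"
proof -
  have "mset_set A \<subseteq># mset_set (insert a B)"
    using assms by (simp add: subset_imp_msubset_mset_set)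
  also have "\<dots> = add_mset a (mset_set (B - {a}))"
    using assms(1) by (simp add: mset_set.insert_remove)
  also have "\<dots> \<subseteq># add_mset a (mset_set B)"
    using assms(1) by (simp add: subset_imp_msubset_mset_set)
  finally show ?thesis .
qed

lemma fval_unique: "fval E p w c \<Longrightarrow> fval E p w c' \<Longrightarrow> c = c'"
proof (induction arbitrary: c' rule: fval.induct)
  case (1 w p g)
  from 1(3) show ?case
  proof (cases rule: fval.cases)
    case (1 g')
    have "image_mset g (mset_set (children E p w)) = image_mset g' (mset_set (children E p w))"
    proof (rule image_mset_cong)
      fix u assume "u \<in># mset_set (children E p w)"
      then have "u \<in> children E p w" using \<open>finite (children E p w)\<close> by simp
      then show "g u = g' u" using "1.IH" 1(3) by auto
    qed
    then show ?thesis using 1 by simp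
  qed
qed

lemma is_cycle_closed_walk:
  assumes walk: "\<And>j. E (x j) (x (Suc j))"
    and nonbacktracking: "\<And>j. x (Suc (Suc j)) \<noteq> x j"
    and irrefl: "\<And>u. \<not> E u u"
    and closed: "x (i + d) = x i" and "0 < d"
    and distinct: "distinct (map (\<lambda>k. x (i + k)) [0..<d])"
  shows "is_cycle E (map (\<lambda>k. x (i + k)) [0..<d])"
  unfolding is_cycle_def
proof (intro conjI allI impI)
  have "d \<noteq> 1" using closed walk[of i] irrefl by auto
  moreover have "d \<noteq> 2" using closed nonbacktracking[of i] by auto
  ultimately show "3 \<le> length (map (\<lambda>k. x (i + k)) [0..<d])" using \<open>0 < d\<close> by simp
  show "distinct (map (\<lambda>k. x (i + k)) [0..<d])" by (rule distinct)
next
  fix j assume "Suc j < length (map (\<lambda>k. x (i + k)) [0..<d])"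
  then show "E (map (\<lambda>k. x (i + k)) [0..<d] ! j) (map (\<lambda>k. x (i + k)) [0..<d] ! Suc j)"
    using walk[of "i + j"] by simp
next
  have "last (map (\<lambda>k. x (i + k)) [0..<d]) = x (i + (d - 1))"
    and "hd (map (\<lambda>k. x (i + k)) [0..<d]) = x (Suc (i + (d - 1)))"
    using \<open>0 < d\<close> closed by (simp_all add: last_map hd_map)
  then show "E (last (map (\<lambda>k. x (i + k)) [0..<d])) (hd (map (\<lambda>k. x (i + k)) [0..<d]))"
    using walk by simp
qed

lemma nonbacktracking_walk_has_cycle:
  assumes graph: "simple_graph V E"
    and walk: "\<And>j. E (x j) (x (Suc j))"
    and nonbacktracking: "\<And>j. x (Suc (Suc j)) \<noteq> x j"
  shows "\<exists>cs. is_cycle E cs"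
proof -
  define P where "P d \<longleftrightarrow> 0 < d \<and> (\<exists>i. x (i + d) = x i)" for d
  have "range x \<subseteq> V" using graph walk unfolding simple_graph_def by blast
  then have "\<not> inj x" using graph unfolding simple_graph_def
    by (meson finite_imageD finite_subset infinite_UNIV_nat)
  then obtain a b where "a < b" "x a = x b"
    unfolding inj_def by (metis linorder_neqE_nat)
  then have "P (b - a)" unfolding P_def by (auto intro!: exI[of _ a])
  define d where "d = (LEAST d. P d)"
  have "P d" unfolding d_def by (rule LeastI) fact
  then obtain i where "0 < d" and closed: "x (i + d) = x i" unfolding P_def by blast
  have "x (i + k) \<noteq> x (i + l)" if "k < l" "l < d" for k l
  proof
    assume "x (i + k) = x (i + l)"
    then have "P (l - k)" unfolding P_def using that by (auto intro!: exI[of _ "i + k"])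
    then have "d \<le> l - k" unfolding d_def by (rule Least_le)
    then show False using that by simp
  qed
  then have "x (i + k) \<noteq> x (i + l)" if "k \<noteq> l" "k < d" "l < d" for k l
    using that by (metis nat_neq_iff)
  then have "distinct (map (\<lambda>k. x (i + k)) [0..<d])"
    unfolding distinct_conv_nth by simp
  moreover have "\<not> E u u" for u using graph unfolding simple_graph_def by blast
  ultimately have "is_cycle E (map (\<lambda>k. x (i + k)) [0..<d])"
    by (intro is_cycle_closed_walk[of E x, OF walk nonbacktracking _ closed \<open>0 < d\<close>])
  then show ?thesis by blast
qed

text \<open>A state \<open>(p, w)\<close> is a vertex \<open>w\<close> with its parent \<open>p\<close> (\<open>None\<close> at the root).\<close>

definition child_step :: "('a \<Rightarrow> 'a \<Rightarrow> bool) \<Rightarrow> 'a option \<times> 'a \<Rightarrow> 'a option \<times> 'a \<Rightarrow> bool" where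
  "child_step E s s' \<longleftrightarrow> fst s' = Some (snd s) \<and> snd s' \<in> children E (fst s) (snd s)"

lemma wf_child_step:
  assumes "is_tree V E"
  shows "wf {(s', s). child_step E s s'}"
proof (rule ccontr)
  assume "\<not> wf {(s', s). child_step E s s'}"
  then obtain f where f: "\<And>i. child_step E (f i) (f (Suc i))"
    unfolding wf_iff_no_infinite_down_chain by auto
  have "E (snd (f i)) (snd (f (Suc i)))" for i
    using f[of i] unfolding child_step_def by auto
  moreover have "snd (f (Suc (Suc i))) \<noteq> snd (f i)" for i
    using f[of i] f[of "Suc i"] unfolding child_step_def by auto
  ultimately show False
    using nonbacktracking_walk_has_cycle[of V E "\<lambda>i. snd (f i)"] assms
    unfolding is_tree_def by blast
qed

lemma finite_children:
  assumes "is_tree V E"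
  shows "finite (children E p w)"
proof (rule finite_subset)
  show "children E p w \<subseteq> V" and "finite V"
    using assms unfolding is_tree_def simple_graph_def by auto
qed

lemma fval_exists:
  assumes tree: "is_tree V E"
  shows "\<exists>c. fval E p w c"
proof -
  have "\<exists>c. fval E (fst s) (snd s) c" for s
  proof (induction s rule: wf_induct[OF wf_child_step[OF tree]])
    case (1 s)
    then have "\<forall>u\<in>children E (fst s) (snd s). \<exists>c. fval E (Some (snd s)) u c"
      unfolding child_step_def by auto
    then obtain g where "\<forall>u\<in>children E (fst s) (snd s). fval E (Some (snd s)) u (g u)"
      by metis
    then have "fval E (fst s) (snd s) (fcomb (image_mset g (mset_set (children E (fst s) (snd s)))))"
      by (intro fval.intros finite_children[OF tree])
    then show ?case ..
  qed
  from this[of "(p, w)"] show ?thesis by simp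
qed

definition fsub :: "('a \<Rightarrow> 'a \<Rightarrow> bool) \<Rightarrow> 'a option \<Rightarrow> 'a \<Rightarrow> nat" where
  "fsub E p w = (THE c. fval E p w c)"

lemma fval_fsub: "is_tree V E \<Longrightarrow> fval E p w (fsub E p w)"
  unfolding fsub_def using fval_exists fval_unique by (metis theI)

lemma fsub_eq:
  assumes tree: "is_tree V E"
  shows "fsub E p w = fcomb (image_mset (fsub E (Some w)) (mset_set (children E p w)))"
  using fval_fsub[OF tree, of p w]
proof (cases rule: fval.cases)
  case (1 g)
  have "image_mset g (mset_set (children E p w)) = image_mset (fsub E (Some w)) (mset_set (children E p w))"
  proof (rule image_mset_cong)
    fix u assume "u \<in># mset_set (children E p w)"
    then have "u \<in> children E p w" using 1(2) by simp
    then show "g u = fsub E (Some w) u" using fval_unique[OF _ fval_fsub[OF tree]] 1(3) by blast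
  qed
  then show ?thesis using 1 by simp
qed

lemma fsub_mono_children:
  assumes tree: "is_tree V E" and "children E p w \<subseteq> children E p' w"
  shows "fsub E p w \<le> fsub E p' w"
  unfolding fsub_eq[OF tree, of p] fsub_eq[OF tree, of p']
  using assms by (intro fcomb_mono image_mset_subseteq_mono subset_imp_msubset_mset_set finite_children)

lemma fsub_child_le:
  assumes tree: "is_tree V E" and "u \<in> children E p w"
  shows "fsub E (Some w) u \<le> fsub E p w"
  unfolding fsub_eq[OF tree, of p w]
  using assms finite_children[OF tree] by (intro member_le_fcomb) simp

text \<open>The children of \<open>w\<close> away from \<open>p\<close> are among its children away from \<open>q\<close>, plus \<open>q\<close>.\<close>

lemma fsub_le_Suc:
  assumes tree: "is_tree V E"
    and "fsub E (Some q) w \<le> k" and "fsub E (Some w) q \<le> k + 1"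
  shows "fsub E p w \<le> k + 1"
proof -
  let ?h = "fsub E (Some w)"
  let ?M = "image_mset ?h (mset_set (children E (Some q) w))"
  have "mset_set (children E p w) \<subseteq># add_mset q (mset_set (children E (Some q) w))"
    by (rule mset_set_subseteq_add_mset[OF finite_children[OF tree]]) auto
  then have "image_mset ?h (mset_set (children E p w)) \<subseteq># add_mset (?h q) ?M"
    using image_mset_subseteq_mono[of _ _ ?h] by fastforce
  then have "fsub E p w \<le> fcomb (add_mset (?h q) ?M)"
    unfolding fsub_eq[OF tree, of p w] by (rule fcomb_mono)
  also have "\<dots> \<le> k + 1"
  proof (rule fcomb_add_mset_le)
    show "fcomb ?M \<le> k" using assms(2) unfolding fsub_eq[OF tree, of "Some q" w] .
  qed fact
  finally show ?thesis .
qed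

lemma child_step_reachable:
  assumes "E\<^sup>*\<^sup>* v x"
  shows "\<exists>p. (child_step E)\<^sup>*\<^sup>* (None, v) (p, x)"
  using assms
proof (induction rule: rtranclp_induct)
  case base
  then show ?case by blast
next
  case (step y z)
  then obtain p where reach: "(child_step E)\<^sup>*\<^sup>* (None, v) (p, y)" by blast
  show ?case
  proof (cases "p = Some z")
    case False
    then have "child_step E (p, y) (Some y, z)" using step(2) unfolding child_step_def by auto
    then show ?thesis using reach by (meson rtranclp.rtrancl_into_rtrancl)
  next
    case True
    \<comment> \<open>the last step went from \<open>z\<close> to \<open>y\<close>, so \<open>z\<close> was reached before it\<close>
    have "\<exists>s. (child_step E)\<^sup>*\<^sup>* (None, v) s \<and> child_step E s (Some z, y)"
      using reach[unfolded True] by (cases rule: rtranclp.cases) auto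
    then obtain s where "(child_step E)\<^sup>*\<^sup>* (None, v) s" "child_step E s (Some z, y)" by blast
    moreover from this(2) have "s = (fst s, z)" unfolding child_step_def by simp
    ultimately show ?thesis by metis
  qed
qed

lemma child_step_reachable_bounds:
  assumes tree: "is_tree V E" and "(child_step E)\<^sup>*\<^sup>* (None, v) s"
  shows "case fst s of
           None \<Rightarrow> snd s = v
         | Some q \<Rightarrow> fsub E (Some q) (snd s) \<le> fsub E None v
                     \<and> fsub E (Some (snd s)) q \<le> fsub E None v + 1"
  using assms(2)
proof (induction rule: rtranclp_induct)
  case base
  then show ?case by simp
next
  case (step y z)
  let ?w = "snd y" and ?u = "snd z"
  have z: "fst z = Some ?w" "?u \<in> children E (fst y) ?w"
    using step(2) unfolding child_step_def by auto
  have "fsub E (Some ?w) ?u \<le> fsub E None v \<and> fsub E (Some ?u) ?w \<le> fsub E None v + 1"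
  proof (cases "fst y")
    case None
    then have "?w = v" using step.IH by simp
    moreover have "fsub E (Some ?w) ?u \<le> fsub E None ?w"
      using fsub_child_le[OF tree] z(2) None by simp
    moreover have "fsub E (Some ?u) ?w \<le> fsub E None ?w"
      by (rule fsub_mono_children[OF tree]) auto
    ultimately show ?thesis by simp
  next
    case (Some q)
    then have IH: "fsub E (Some q) ?w \<le> fsub E None v" "fsub E (Some ?w) q \<le> fsub E None v + 1"
      using step.IH by simp_all
    have "fsub E (Some ?w) ?u \<le> fsub E (Some q) ?w"
      using fsub_child_le[OF tree] z(2) Some by simp
    with IH fsub_le_Suc[OF tree IH] show ?thesis by simp
  qed
  then show ?case using z by simp
qed

lemma fsub_None_le_Suc:
  assumes tree: "is_tree V E" and "v \<in> V" and "w \<in> V"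
  shows "fsub E None w \<le> fsub E None v + 1"
proof -
  have "E\<^sup>*\<^sup>* v w"
    using assms unfolding is_tree_def connected_graph_def by blast
  from child_step_reachable[OF this]
  obtain p where "(child_step E)\<^sup>*\<^sup>* (None, v) (p, w)" ..
  note bounds = child_step_reachable_bounds[OF tree this]
  show ?thesis
  proof (cases p)
    case None
    then show ?thesis using bounds by simp
  next
    case (Some q)
    then have "fsub E (Some q) w \<le> fsub E None v" and "fsub E (Some w) q \<le> fsub E None v + 1"
      using bounds by simp_all
    then show ?thesis by (rule fsub_le_Suc[OF tree])
  qed
qed

theorem proposition4p3:
  fixes V :: "'a set" and E :: "'a \<Rightarrow> 'a \<Rightarrow> bool" and v :: 'a
  assumes "is_tree V E" and "card V \<ge> 3" and "v \<in> V"
  shows "froot E v + 1 \<ge> Max ((\<lambda>w. froot E w) ` V)"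
proof -
  have "froot E w = fsub E None w" for w unfolding froot_def fsub_def ..
  moreover have "finite V" using assms(1) unfolding is_tree_def simple_graph_def by simp
  ultimately show ?thesis
    using fsub_None_le_Suc[OF assms(1,3)] assms(3) by (subst Max_le_iff) auto
qed

end
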